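(* Let $\varrho$ be a proximate order of order $\rho>0$ and $\sigma\ge0$. If $f\in A_{\varrho,\sigma+0}$ has Taylor expansion $f(x)=\sum_{\ell=0}^\infty x^\ell a_\ell$, then the partial sums $\sum_{\ell\le N}x^\ell a_\ell$ converge to $f$ in $A_{\varrho,\sigma+0}$ as $N\to\infty$. In particular, the set of polynomials $\sum_{\ell=0}^M x^\ell a_\ell$ ($a_\ell\in\mathbb{R}_n$) is dense in $A_{\varrho,+0}$ and dense in $A_\varrho$.
   Context: $\mathbb{R}_n$ is the real Clifford algebra generated by $e_1,\dots,e_n$ with $e_ie_j=-e_je_i$ ($i\ne j$), $e_i^2=-1$, with Euclidean norm $|a|^2=\sum_Aa_A^2$. Paravectors $x=x_0+\sum x_\ell e_\ell$ are identified with $\mathbb{R}^{n+1}$; $\mathbb{S}=\{\sum x_\ell e_\ell:\sum x_\ell^2=1\}$. $\mathcal{SM}_L(\mathbb{R}^{n+1})$ is the set of entire left slice monogenic functions: $f(u+jv)=f_0(u,v)+jf_1(u,v)$ for all $u,v\in\mathbb{R}$, $j\in\mathbb{S}$, with $f_0,f_1:\mathbb{R}^2\to\mathbb{R}_n$ continuously differentiable, $f_0$ even and $f_1$ odd in $v$, $\partial_uf_0=\partial_vf_1$, $\partial_vf_0=-\partial_uf_1$; each such $f$ equals its everywhere convergent Taylor series $\sum x^\ell a_\ell$ with $a_\ell=\partial_{x_0}^\ell f(0)/\ell!$. A proximate order is a differentiable $\varrho:[0,\infty)\to[0,\infty)$ with $\lim_{r\to\infty}\varrho(r)=\rho>0$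 and $\lim_{r\to\infty}\varrho'(r)r\ln r=0$. For $\sigma>0$, $A_{\varrho,\sigma}=\{f\in\mathcal{SM}_L(\mathbb{R}^{n+1}):\|f\|_{\varrho,\sigma}:=\sup_x|f(x)|e^{-\sigma|x|^{\varrho(|x|)}}<\infty\}$. $A_\varrho=\bigcup_{\sigma>0}A_{\varrho,\sigma}$ with the inductive limit topology (a sequence converges iff it and its limit lie in some $A_{\varrho,\sigma}$ and it converges in $\|\cdot\|_{\varrho,\sigma}$). For $\sigma\ge0$, $A_{\varrho,\sigma+0}=\bigcap_{\epsilon>0}A_{\varrho,\sigma+\epsilon}$, where convergence means convergence in $\|\cdot\|_{\varrho,\sigma+\epsilon}$ for every $\epsilon>0$; $A_{\varrho,+0}:=A_{\varrho,0+0}$. *)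

theory Defs
  imports "HOL-Analysis.Analysis"
begin

text \<open>An element of R_n is represented by its coefficient function A \<mapsto> a_A on
  subsets A of {1..n} (basis element e_A = e_{a1}...e_{ak}, a1<...<ak).\<close>

type_synonym cl = "nat set \<Rightarrow> real"

definition clifford :: "nat \<Rightarrow> cl set" where
  "clifford n = {a. \<forall>A. a A \<noteq> 0 \<longrightarrow> A \<subseteq> {1..n}}"

text \<open>Sign in e_A e_B = sign A B * e_(A symdiff B): one factor -1 for every
  transposition (pairs i in A, j in B with j < i) and one for each e_i^2 = -1.\<close>
definition cl_sign :: "nat set \<Rightarrow> nat set \<Rightarrow> real" where
  "cl_sign A B = (-1) ^ (card {(i, j). i \<in> A \<and> j \<in> B \<and> j < i} + card (A \<inter> B))"

definition cl_mult :: "nat \<Rightarrow> cl \<Rightarrow> cl \<Rightarrow> cl" where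
  "cl_mult n a b = (\<lambda>C. \<Sum>A\<in>Pow {1..n}. \<Sum>B\<in>Pow {1..n}.
      if (A - B) \<union> (B - A) = C then cl_sign A B * a A * b B else 0)"

definition cl_add :: "cl \<Rightarrow> cl \<Rightarrow> cl" where
  "cl_add a b = (\<lambda>A. a A + b A)"

definition cl_scale :: "real \<Rightarrow> cl \<Rightarrow> cl" where
  "cl_scale r a = (\<lambda>A. r * a A)"

definition cl_real :: "real \<Rightarrow> cl" where
  "cl_real r = (\<lambda>A. if A = {} then r else 0)"

definition cl_norm :: "nat \<Rightarrow> cl \<Rightarrow> real" where
  "cl_norm n a = sqrt (\<Sum>A\<in>Pow {1..n}. (a A)\<^sup>2)"

fun cl_pow :: "nat \<Rightarrow> cl \<Rightarrow> nat \<Rightarrow> cl" where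
  "cl_pow n x 0 = cl_real 1"
| "cl_pow n x (Suc k) = cl_mult n (cl_pow n x k) x"

text \<open>Paravectors x = x_0 + sum x_l e_l (identified with R^(n+1)); the sphere S.\<close>
definition paravectors :: "nat \<Rightarrow> cl set" where
  "paravectors n = {x \<in> clifford n. \<forall>A. x A \<noteq> 0 \<longrightarrow> card A \<le> 1}"

definition cl_sphere :: "nat \<Rightarrow> cl set" where
  "cl_sphere n = {x \<in> paravectors n. x {} = 0 \<and> cl_norm n x = 1}"

definition slice_monogenic :: "nat \<Rightarrow> (cl \<Rightarrow> cl) \<Rightarrow> bool" where
  "slice_monogenic n f \<longleftrightarrow>
    (\<exists>(f0 :: real \<times> real \<Rightarrow> cl) (f1 :: real \<times> real \<Rightarrow> cl)
       (D0u :: real \<times> real \<Rightarrow> cl) (D0v :: real \<times> real \<Rightarrow> cl)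
       (D1u :: real \<times> real \<Rightarrow> cl) (D1v :: real \<times> real \<Rightarrow> cl).
      (\<forall>p. f0 p \<in> clifford n \<and> f1 p \<in> clifford n) \<and>
      \<comment> \<open>continuous differentiability (componentwise), with partial derivatives D\<close>
      (\<forall>A p. ((\<lambda>q. f0 q A) has_derivative (\<lambda>(h, k). h * D0u p A + k * D0v p A)) (at p)) \<and>
      (\<forall>A p. ((\<lambda>q. f1 q A) has_derivative (\<lambda>(h, k). h * D1u p A + k * D1v p A)) (at p)) \<and>
      (\<forall>A. continuous_on UNIV (\<lambda>p. D0u p A) \<and> continuous_on UNIV (\<lambda>p. D0v p A) \<and>
           continuous_on UNIV (\<lambda>p. D1u p A) \<and> continuous_on UNIV (\<lambda>p. D1v p A)) \<and>
      \<comment> \<open>f0 even, f1 odd in v\<close>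
      (\<forall>u v. f0 (u, - v) = f0 (u, v) \<and> f1 (u, - v) = cl_scale (-1) (f1 (u, v))) \<and>
      \<comment> \<open>Cauchy-Riemann system\<close>
      (\<forall>p. D0u p = D1v p \<and> D0v p = cl_scale (-1) (D1u p)) \<and>
      \<comment> \<open>f(u + j v) = f0(u,v) + j f1(u,v)\<close>
      (\<forall>u v j. j \<in> cl_sphere n \<longrightarrow>
          f (cl_add (cl_real u) (cl_scale v j)) = cl_add (f0 (u, v)) (cl_mult n j (f1 (u, v)))))"

definition proximate_order :: "(real \<Rightarrow> real) \<Rightarrow> real \<Rightarrow> bool" where
  "proximate_order rh \<rho> \<longleftrightarrow> \<rho> > 0 \<and>
     (\<forall>r\<ge>0. rh r \<ge> 0 \<and> rh differentiable (at r within {0..})) \<and>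
     (rh \<longlongrightarrow> \<rho>) at_top \<and>
     ((\<lambda>r. deriv rh r * r * ln r) \<longlongrightarrow> 0) at_top"

definition weight :: "nat \<Rightarrow> (real \<Rightarrow> real) \<Rightarrow> real \<Rightarrow> cl \<Rightarrow> real" where
  "weight n rh \<sigma> x = exp (- \<sigma> * (cl_norm n x powr rh (cl_norm n x)))"

definition in_A :: "nat \<Rightarrow> (real \<Rightarrow> real) \<Rightarrow> real \<Rightarrow> (cl \<Rightarrow> cl) \<Rightarrow> bool" where
  "in_A n rh \<sigma> f \<longleftrightarrow> slice_monogenic n f \<and>
     bdd_above ((\<lambda>x. cl_norm n (f x) * weight n rh \<sigma> x) ` paravectors n)"

definition A_norm :: "nat \<Rightarrow> (real \<Rightarrow> real) \<Rightarrow> real \<Rightarrow> (cl \<Rightarrow> cl) \<Rightarrow> real" where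
  "A_norm n rh \<sigma> f = (SUP x\<in>paravectors n. cl_norm n (f x) * weight n rh \<sigma> x)"

definition in_A_plus :: "nat \<Rightarrow> (real \<Rightarrow> real) \<Rightarrow> real \<Rightarrow> (cl \<Rightarrow> cl) \<Rightarrow> bool" where
  "in_A_plus n rh \<sigma> f \<longleftrightarrow> (\<forall>\<epsilon>>0. in_A n rh (\<sigma> + \<epsilon>) f)"

definition in_A_union :: "nat \<Rightarrow> (real \<Rightarrow> real) \<Rightarrow> (cl \<Rightarrow> cl) \<Rightarrow> bool" where
  "in_A_union n rh f \<longleftrightarrow> (\<exists>\<sigma>>0. in_A n rh \<sigma> f)"

definition fun_diff :: "(cl \<Rightarrow> cl) \<Rightarrow> (cl \<Rightarrow> cl) \<Rightarrow> (cl \<Rightarrow> cl)" where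
  "fun_diff g f = (\<lambda>x A. g x A - f x A)"

definition conv_A_plus ::
  "nat \<Rightarrow> (real \<Rightarrow> real) \<Rightarrow> real \<Rightarrow> (nat \<Rightarrow> cl \<Rightarrow> cl) \<Rightarrow> (cl \<Rightarrow> cl) \<Rightarrow> bool" where
  "conv_A_plus n rh \<sigma> g f \<longleftrightarrow> (\<forall>k. in_A_plus n rh \<sigma> (g k)) \<and> in_A_plus n rh \<sigma> f \<and>
     (\<forall>\<epsilon>>0. (\<lambda>k. A_norm n rh (\<sigma> + \<epsilon>) (fun_diff (g k) f)) \<longlonglongrightarrow> 0)"

definition conv_A_union ::
  "nat \<Rightarrow> (real \<Rightarrow> real) \<Rightarrow> (nat \<Rightarrow> cl \<Rightarrow> cl) \<Rightarrow> (cl \<Rightarrow> cl) \<Rightarrow> bool" where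
  "conv_A_union n rh g f \<longleftrightarrow> (\<exists>\<sigma>>0. (\<forall>k. in_A n rh \<sigma> (g k)) \<and> in_A n rh \<sigma> f \<and>
     (\<lambda>k. A_norm n rh \<sigma> (fun_diff (g k) f)) \<longlonglongrightarrow> 0)"

definition poly_fun :: "nat \<Rightarrow> (nat \<Rightarrow> cl) \<Rightarrow> nat \<Rightarrow> cl \<Rightarrow> cl" where
  "poly_fun n a M = (\<lambda>x A. \<Sum>l\<le>M. cl_mult n (cl_pow n x l) (a l) A)"

definition is_cl_poly :: "nat \<Rightarrow> (cl \<Rightarrow> cl) \<Rightarrow> bool" where
  "is_cl_poly n p \<longleftrightarrow> (\<exists>a M. (\<forall>l. a l \<in> clifford n) \<and> p = poly_fun n a M)"

end

(* Along the slice x = u + v j (j in the unit sphere) the powers of x are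
   x^l = Re (z^l) + Im (z^l) j with z = u + i v.  Hence each component of the Taylor
   series of f is an ordinary power series sum_l a_l(B) z^l with real coefficients, and
   the values of f at u + v e_1 and u - v e_1 recover its real and imaginary parts.
   If |f(x)| <= M exp (s |x|^rho(|x|)), Cauchy's inequality on the circle |z| = q r
   bounds a_l(B) by 2 M exp (s (q r)^rho(q r)) / (q r)^l.  For a proximate order and
   s < t, the mean value theorem and r rho'(r) ln r -> 0 give some q > 1 with
   s (q r)^rho(q r) <= t r^rho(r) for large r, so the remainder of order N is at most
   K q^(-N) in the weight exp (- t |x|^rho(|x|)).  Taking s = sigma + eps/2 and
   t = sigma + eps gives convergence in A_{rho,sigma+0}.  Density follows because the
   slice functions f0 + i f1 of an entire slice monogenic function are entire
   holomorphic functions (Cauchy-Riemann), so it has such a Taylor expansion, and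
   A_{rho,sigma} is contained in A_{rho,sigma+0}. *)

theory Submission
  imports Defs "HOL-Complex_Analysis.Complex_Analysis"
begin

lemma cl_mult_expand:
  "cl_mult n a b C = (\<Sum>A\<in>Pow {1..n}. \<Sum>B\<in>Pow {1..n}.
     (if sym_diff A B = C then cl_sign A B else 0) * a A * b B)"
  unfolding cl_mult_def by (intro sum.cong refl) auto

lemma cl_mult_add_left: "cl_mult n (\<lambda>A. a A + b A) c C = cl_mult n a c C + cl_mult n b c C"
  unfolding cl_mult_expand by (simp add: algebra_simps sum.distrib)

lemma cl_mult_add_right: "cl_mult n a (\<lambda>A. b A + c A) C = cl_mult n a b C + cl_mult n a c C"
  unfolding cl_mult_expand by (simp add: algebra_simps sum.distrib)

lemma cl_mult_scale_left: "cl_mult n (\<lambda>A. r * a A) b C = r * cl_mult n a b C"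
  unfolding cl_mult_expand by (simp add: algebra_simps sum_distrib_left)

lemma cl_mult_scale_right: "cl_mult n a (\<lambda>A. r * b A) C = r * cl_mult n a b C"
  unfolding cl_mult_expand by (simp add: algebra_simps sum_distrib_left)

lemma cl_mult_uminus_right: "cl_mult n a (\<lambda>A. - b A) C = - cl_mult n a b C"
  using cl_mult_scale_right[of n a "-1" b C] by simp

lemma cl_mult_sum_right:
  "finite S \<Longrightarrow> cl_mult n a (\<lambda>A. \<Sum>l\<in>S. b l A) C = (\<Sum>l\<in>S. cl_mult n a (b l) C)"
  unfolding cl_mult_expand
  by (simp add: sum_distrib_left sum_distrib_right sum.swap[of _ S] algebra_simps)

lemma cl_mult_tendsto_right:
  "(\<And>A. (\<lambda>N. b N A) \<longlonglongrightarrow> B A) \<Longrightarrow> (\<lambda>N. cl_mult n a (b N) C) \<longlonglongrightarrow> cl_mult n a B C"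
  unfolding cl_mult_expand by (intro tendsto_intros)

lemma cl_real_clifford: "cl_real r \<in> clifford n"
  unfolding clifford_def cl_real_def by auto

lemma clifford_lincomb:
  "a \<in> clifford n \<Longrightarrow> b \<in> clifford n \<Longrightarrow> (\<lambda>A. r * a A + s * b A) \<in> clifford n"
  unfolding clifford_def by (simp, metis add.right_neutral mult_zero_right)

lemma cl_mult_real_left:
  assumes "b \<in> clifford n"
  shows "cl_mult n (cl_real r) b C = r * b C"
proof -
  have "cl_mult n (cl_real r) b C = (\<Sum>A\<in>Pow {1..n}. if A = {} then
      (\<Sum>B\<in>Pow {1..n}. (if sym_diff A B = C then cl_sign A B else 0) * r * b B) else 0)"
    unfolding cl_mult_expand cl_real_def by (intro sum.cong refl) auto
  also have "\<dots> = (\<Sum>B\<in>Pow {1..n}. (if B = C then cl_sign {} B else 0) * r * b B)"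
    by (subst sum.delta) auto
  also have "\<dots> = (\<Sum>B\<in>Pow {1..n}. if B = C then r * b B else 0)"
    by (intro sum.cong refl) (simp add: cl_sign_def)
  also have "\<dots> = r * b C"
    using assms by (auto simp: clifford_def)
  finally show ?thesis .
qed

lemma cl_mult_real_right:
  assumes "b \<in> clifford n"
  shows "cl_mult n b (cl_real r) C = r * b C"
proof -
  have "cl_mult n b (cl_real r) C = (\<Sum>A\<in>Pow {1..n}. \<Sum>B\<in>Pow {1..n}.
      if B = {} then (if sym_diff A B = C then cl_sign A B else 0) * b A * r else 0)"
    unfolding cl_mult_expand cl_real_def by (intro sum.cong refl) auto
  also have "\<dots> = (\<Sum>A\<in>Pow {1..n}. if A = C then r * b A else 0)"
    by (intro sum.cong refl) (auto simp: cl_sign_def sum.delta')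
  also have "\<dots> = r * b C"
    using assms by (auto simp: clifford_def)
  finally show ?thesis .
qed

lemma cl_sign_singletons: "cl_sign {i} {k} = (if k \<le> i then -1 else 1)"
proof -
  have "{(i', k'). i' \<in> {i} \<and> k' \<in> {k} \<and> k' < i'} = (if k < i then {(i, k)} else {})"
    by auto
  then show ?thesis
    by (auto simp: cl_sign_def)
qed

lemma cl_sign_square: "cl_sign A B * cl_sign A B = 1"
  by (simp add: cl_sign_def flip: power_add)

lemma abs_cl_sign: "\<bar>cl_sign A B\<bar> = 1"
  by (simp add: cl_sign_def power_abs)

lemma cl_sphere_clifford: "j \<in> cl_sphere n \<Longrightarrow> j \<in> clifford n"
  by (simp add: cl_sphere_def paravectors_def)

lemma cl_sphere_sum_squares: "j \<in> cl_sphere n \<Longrightarrow> (\<Sum>A\<in>Pow {1..n}. (j A)\<^sup>2) = 1"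
  by (simp add: cl_sphere_def cl_norm_def)

lemma cl_sphere_support:
  assumes "j \<in> cl_sphere n" and "j A \<noteq> 0"
  obtains i where "i \<in> {1..n}" and "A = {i}"
proof -
  have sub: "A \<subseteq> {1..n}" and "card A \<le> 1" "A \<noteq> {}"
    using assms by (auto simp: cl_sphere_def paravectors_def clifford_def)
  moreover have "finite A"
    using sub finite_subset by blast
  ultimately have "card A = 1"
    by (simp add: le_antisym Suc_leI card_gt_0_iff)
  then obtain i where "A = {i}"
    by (rule card_1_singletonE)
  then show ?thesis
    using that sub by blast
qed

lemma sum_Pow_singletons:
  fixes n :: nat
  assumes "\<And>A. h A \<noteq> 0 \<Longrightarrow> \<exists>i\<in>{1..n}. A = {i}"
  shows "(\<Sum>A\<in>Pow {1..n}. h A) = (\<Sum>i=1..n. h {i})"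
proof -
  have "(\<Sum>i=1..n. h {i}) = (\<Sum>A\<in>(\<lambda>i. {i}) ` {1..n}. h A)"
    by (simp add: sum.reindex)
  also have "\<dots> = (\<Sum>A\<in>Pow {1..n}. h A)"
    by (rule sum.mono_neutral_left) (use assms in auto)
  finally show ?thesis by simp
qed

lemma cl_mult_sphere_self:
  assumes j: "j \<in> cl_sphere n"
  shows "cl_mult n j j = cl_real (-1)"
proof
  fix C
  define c where "c A B = (if sym_diff A B = C then cl_sign A B else 0)" for A B :: "nat set"
  define g where "g i k = c {i} {k} * j {i} * j {k}" for i k
  have singleton: "\<exists>i\<in>{1..n}. A = {i}" if "j A \<noteq> 0" for A
    using cl_sphere_support[OF j that] by blast
  have "cl_mult n j j C = (\<Sum>A\<in>Pow {1..n}. \<Sum>k=1..n. c A {k} * j A * j {k})"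
    unfolding cl_mult_expand c_def[symmetric]
    by (intro sum.cong refl sum_Pow_singletons) (metis mult_zero_right singleton)
  also have "\<dots> = (\<Sum>i=1..n. \<Sum>k=1..n. g i k)"
    unfolding g_def by (rule sum_Pow_singletons, rule singleton) auto
  also have "\<dots> = cl_real (-1) C"
  proof (cases "C = {}")
    case True
    then have "g i k = (if k = i then - (j {i})\<^sup>2 else 0)" for i k
      by (auto simp: g_def c_def cl_sign_singletons power2_eq_square)
    then have "(\<Sum>i=1..n. \<Sum>k=1..n. g i k) = - (\<Sum>i=1..n. (j {i})\<^sup>2)"
      by (simp add: sum_negf)
    also have "(\<Sum>i=1..n. (j {i})\<^sup>2) = 1"
      using cl_sphere_sum_squares[OF j] sum_Pow_singletons[of "\<lambda>A. (j A)\<^sup>2" n] singleton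
      by simp
    finally show ?thesis
      using True by (simp add: cl_real_def)
  next
    case False
    then have g_antisym: "g k i = - g i k" for i k
      by (cases "i = k") (auto simp: g_def c_def cl_sign_singletons Un_commute)
    have "(\<Sum>i=1..n. \<Sum>k=1..n. g i k) = (\<Sum>k=1..n. \<Sum>i=1..n. - g k i)"
      by (subst sum.swap) (intro sum.cong refl g_antisym)
    also have "\<dots> = - (\<Sum>k=1..n. \<Sum>i=1..n. g k i)"
      by (simp only: sum_negf)
    finally have "(\<Sum>i=1..n. \<Sum>k=1..n. g i k) = 0"
      by linarith
    then show ?thesis
      using False by (simp add: cl_real_def)
  qed
  finally show "cl_mult n j j C = cl_real (-1) C" .
qed

definition cl_basis :: "nat \<Rightarrow> cl" where
  "cl_basis i = (\<lambda>A. if A = {i} then 1 else 0)"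

lemma cl_basis_sphere:
  assumes "i \<in> {1..n}"
  shows "cl_basis i \<in> cl_sphere n"
proof -
  have "(\<Sum>A\<in>Pow {1..n}. (cl_basis i A)\<^sup>2) = 1"
    using assms by (simp add: cl_basis_def if_distrib[of "\<lambda>x. x\<^sup>2"] sum.delta cong: if_cong)
  then show ?thesis
    using assms by (auto simp: cl_sphere_def paravectors_def clifford_def cl_norm_def cl_basis_def)
qed

lemma sym_diff_left_cancel: "sym_diff A X = sym_diff A Y \<longleftrightarrow> X = Y"
  by blast

lemma cl_mult_basis:
  assumes "i \<in> {1..n}" and "B \<subseteq> {1..n}"
  shows "cl_mult n (cl_basis i) b (sym_diff {i} B) = cl_sign {i} B * b B"
proof -
  have "cl_mult n (cl_basis i) b (sym_diff {i} B) = (\<Sum>A\<in>Pow {1..n}. if A = {i} then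
      (\<Sum>B'\<in>Pow {1..n}. (if sym_diff A B' = sym_diff {i} B then cl_sign A B' else 0) * b B') else 0)"
    unfolding cl_mult_expand by (intro sum.cong refl) (auto simp: cl_basis_def)
  also have "\<dots> = (\<Sum>B'\<in>Pow {1..n}.
      (if sym_diff {i} B' = sym_diff {i} B then cl_sign {i} B' else 0) * b B')"
    using assms(1) by (subst sum.delta) auto
  also have "\<dots> = (\<Sum>B'\<in>Pow {1..n}. if B' = B then cl_sign {i} B' * b B' else 0)"
    by (intro sum.cong refl) (simp add: sym_diff_left_cancel)
  also have "\<dots> = cl_sign {i} B * b B"
    using assms(2) by simp
  finally show ?thesis .
qed

definition cl_slice :: "cl \<Rightarrow> complex \<Rightarrow> cl" where
  "cl_slice j z = cl_add (cl_real (Re z)) (cl_scale (Im z) j)"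

text \<open>Evaluation of a complex-coefficient element \<open>w = \<Sum> w\<^sub>A e\<^sub>A\<close> at \<open>i := j\<close>, with the
  imaginary part multiplied by \<open>j\<close> from the left as in \<^const>\<open>slice_monogenic\<close>.\<close>
definition cl_of_complex :: "nat \<Rightarrow> cl \<Rightarrow> (nat set \<Rightarrow> complex) \<Rightarrow> cl" where
  "cl_of_complex n j w = cl_add (\<lambda>A. Re (w A)) (cl_mult n j (\<lambda>A. Im (w A)))"

lemma cl_slice_apply: "cl_slice j z C = Re z * cl_real 1 C + Im z * j C"
  by (simp add: cl_slice_def cl_add_def cl_scale_def cl_real_def)

lemma cl_slice_clifford: "j \<in> clifford n \<Longrightarrow> cl_slice j z \<in> clifford n"
  unfolding cl_slice_apply[abs_def] by (intro clifford_lincomb cl_real_clifford)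

lemma cl_mult_slice_left:
  assumes "b \<in> clifford n"
  shows "cl_mult n (cl_slice j w) b C = Re w * b C + Im w * cl_mult n j b C"
  unfolding cl_slice_apply[abs_def]
  by (simp only: cl_mult_add_left cl_mult_scale_left cl_mult_real_left[OF assms])

lemma cl_pow_slice:
  assumes j: "j \<in> cl_sphere n"
  shows "cl_pow n (cl_slice j z) l = cl_slice j (z ^ l)"
proof (induction l)
  case 0
  show ?case
    by (auto simp: cl_slice_apply cl_real_def)
next
  case (Suc l)
  have jc: "j \<in> clifford n"
    using j by (rule cl_sphere_clifford)
  have jz: "cl_mult n j (cl_slice j z) C = Re z * j C - Im z * cl_real 1 C" for C
    unfolding cl_slice_apply[abs_def]
    by (simp only: cl_mult_add_right cl_mult_scale_right cl_mult_real_right[OF jc]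
        cl_mult_sphere_self[OF j]) (simp add: cl_real_def)
  show ?case
  proof
    fix C
    have "cl_pow n (cl_slice j z) (Suc l) C = cl_mult n (cl_slice j (z ^ l)) (cl_slice j z) C"
      using Suc by simp
    also have "\<dots> = Re (z ^ l) * cl_slice j z C + Im (z ^ l) * cl_mult n j (cl_slice j z) C"
      by (rule cl_mult_slice_left[OF cl_slice_clifford[OF jc]])
    also have "\<dots> = cl_slice j (z ^ Suc l) C"
      by (simp add: jz cl_slice_apply algebra_simps)
    finally show "cl_pow n (cl_slice j z) (Suc l) C = cl_slice j (z ^ Suc l) C" .
  qed
qed

lemma cl_mult_pow_slice:
  assumes "j \<in> cl_sphere n" and "b \<in> clifford n"
  shows "cl_mult n (cl_pow n (cl_slice j z) l) b = cl_of_complex n j (\<lambda>B. of_real (b B) * z ^ l)"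
proof
  fix C
  have "cl_mult n j (\<lambda>B. b B * Im (z ^ l)) C = Im (z ^ l) * cl_mult n j b C"
    using cl_mult_scale_right[of n j "Im (z ^ l)" b C] by (simp add: mult.commute)
  then show "cl_mult n (cl_pow n (cl_slice j z) l) b C = cl_of_complex n j (\<lambda>B. of_real (b B) * z ^ l) C"
    using assms by (simp add: cl_pow_slice cl_mult_slice_left cl_of_complex_def cl_add_def)
qed

lemma cl_of_complex_sum:
  "finite S \<Longrightarrow> cl_of_complex n j (\<lambda>B. \<Sum>l\<in>S. w l B) C = (\<Sum>l\<in>S. cl_of_complex n j (w l) C)"
  by (simp add: cl_of_complex_def cl_add_def Re_sum Im_sum cl_mult_sum_right sum.distrib)

lemma poly_fun_slice:
  assumes "j \<in> cl_sphere n" and "\<forall>l. a l \<in> clifford n"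
  shows "poly_fun n a N (cl_slice j z) = cl_of_complex n j (\<lambda>B. \<Sum>l\<le>N. of_real (a l B) * z ^ l)"
  using assms by (auto simp: poly_fun_def cl_mult_pow_slice cl_of_complex_sum)

lemma cl_of_complex_tendsto:
  "(\<And>B. (\<lambda>N. w N B) \<longlonglongrightarrow> W B) \<Longrightarrow> (\<lambda>N. cl_of_complex n j (w N) C) \<longlonglongrightarrow> cl_of_complex n j W C"
  unfolding cl_of_complex_def cl_add_def by (intro tendsto_intros cl_mult_tendsto_right)

lemma cl_of_complex_add_cnj:
  "cl_of_complex n j w C + cl_of_complex n j (\<lambda>A. cnj (w A)) C = 2 * Re (w C)"
  by (simp add: cl_of_complex_def cl_add_def cl_mult_uminus_right)

lemma cl_of_complex_diff_cnj:
  "cl_of_complex n j w C - cl_of_complex n j (\<lambda>A. cnj (w A)) C = 2 * cl_mult n j (\<lambda>A. Im (w A)) C"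
  by (simp add: cl_of_complex_def cl_add_def cl_mult_uminus_right)

lemma cl_of_complex_basis_Re_Im:
  assumes "i \<in> {1..n}" and "B \<subseteq> {1..n}"
  shows "Re (w B) =
      (cl_of_complex n (cl_basis i) w B + cl_of_complex n (cl_basis i) (\<lambda>A. cnj (w A)) B) / 2"
    and "Im (w B) = cl_sign {i} B * ((cl_of_complex n (cl_basis i) w (sym_diff {i} B)
      - cl_of_complex n (cl_basis i) (\<lambda>A. cnj (w A)) (sym_diff {i} B)) / 2)"
proof -
  show "Re (w B) =
      (cl_of_complex n (cl_basis i) w B + cl_of_complex n (cl_basis i) (\<lambda>A. cnj (w A)) B) / 2"
    by (simp add: cl_of_complex_add_cnj)
  have "cl_of_complex n (cl_basis i) w (sym_diff {i} B)
      - cl_of_complex n (cl_basis i) (\<lambda>A. cnj (w A)) (sym_diff {i} B) = 2 * (cl_sign {i} B * Im (w B))"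
    using assms by (simp add: cl_of_complex_diff_cnj cl_mult_basis)
  then show "Im (w B) = cl_sign {i} B * ((cl_of_complex n (cl_basis i) w (sym_diff {i} B)
      - cl_of_complex n (cl_basis i) (\<lambda>A. cnj (w A)) (sym_diff {i} B)) / 2)"
    using cl_sign_square[of "{i}" B] by algebra
qed

lemma cl_norm_L2_set: "cl_norm n b = L2_set b (Pow {1..n})"
  by (simp add: cl_norm_def L2_set_def)

lemma cl_norm_nonneg: "0 \<le> cl_norm n b"
  by (simp add: cl_norm_L2_set)

lemma cl_norm_triangle: "cl_norm n (\<lambda>A. b A + c A) \<le> cl_norm n b + cl_norm n c"
  unfolding cl_norm_L2_set by (rule L2_set_triangle_ineq)

lemma cl_component_le_norm: "A \<in> Pow {1..n} \<Longrightarrow> \<bar>b A\<bar> \<le> cl_norm n b"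
  using member_le_L2_set[of "Pow {1..n}" A "\<lambda>A. \<bar>b A\<bar>"]
  by (simp add: cl_norm_L2_set L2_set_def)

lemma cl_norm_le_components:
  assumes "\<And>A. A \<in> Pow {1..n} \<Longrightarrow> \<bar>b A\<bar> \<le> \<beta>"
  shows "cl_norm n b \<le> 2 ^ n * \<beta>"
proof -
  have "cl_norm n b \<le> (\<Sum>A\<in>Pow {1..n}. \<bar>b A\<bar>)"
    unfolding cl_norm_L2_set by (rule L2_set_le_sum_abs)
  also have "\<dots> \<le> (\<Sum>A\<in>Pow {1..n}. \<beta>)"
    by (rule sum_mono) (rule assms)
  also have "\<dots> = 2 ^ n * \<beta>"
    by (simp add: card_Pow)
  finally show ?thesis .
qed

lemma cl_sphere_component_le:
  assumes "j \<in> cl_sphere n"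
  shows "\<bar>j A\<bar> \<le> 1"
proof (cases "A \<in> Pow {1..n}")
  case True
  then show ?thesis
    using assms cl_component_le_norm[of A n j] by (simp add: cl_sphere_def)
next
  case False
  then have "j A = 0"
    using cl_sphere_clifford[OF assms] unfolding clifford_def by blast
  then show ?thesis
    by simp
qed

lemma cl_mult_component_bound:
  assumes "\<And>A. \<bar>j A\<bar> \<le> 1" and "\<And>B. B \<in> Pow {1..n} \<Longrightarrow> \<bar>b B\<bar> \<le> \<beta>"
  shows "\<bar>cl_mult n j b C\<bar> \<le> 4 ^ n * \<beta>"
proof -
  have term_bound: "\<bar>(if sym_diff A B = C then cl_sign A B else 0) * j A * b B\<bar> \<le> \<beta>"
    if "B \<in> Pow {1..n}" for A B
  proof -
    have "\<bar>(if sym_diff A B = C then cl_sign A B else 0)\<bar> \<le> 1"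
      by (simp add: abs_cl_sign)
    then have "\<bar>(if sym_diff A B = C then cl_sign A B else 0)\<bar> * \<bar>j A\<bar> * \<bar>b B\<bar> \<le> 1 * 1 * \<beta>"
      using assms(1)[of A] assms(2)[OF that] by (intro mult_mono) auto
    then show ?thesis
      by (simp add: abs_mult)
  qed
  have "\<bar>cl_mult n j b C\<bar> \<le> (\<Sum>A\<in>Pow {1..n}. \<Sum>B\<in>Pow {1..n}. \<beta>)"
    unfolding cl_mult_expand
    by (intro order_trans[OF sum_abs] sum_mono order_trans[OF sum_abs] term_bound) auto
  also have "\<dots> = 4 ^ n * \<beta>"
    by (simp add: card_Pow power_mult_distrib[symmetric])
  finally show ?thesis .
qed

lemma cl_of_complex_component_bound:
  assumes "j \<in> cl_sphere n" and "\<And>B. cmod (w B) \<le> \<beta>"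
  shows "\<bar>cl_of_complex n j w C\<bar> \<le> (1 + 4 ^ n) * \<beta>"
proof -
  have "\<bar>Re (w C)\<bar> \<le> \<beta>"
    using abs_Re_le_cmod assms(2) order_trans by blast
  moreover have "\<bar>cl_mult n j (\<lambda>B. Im (w B)) C\<bar> \<le> 4 ^ n * \<beta>"
    using cl_sphere_component_le[OF assms(1)] abs_Im_le_cmod assms(2) order_trans
    by (intro cl_mult_component_bound) blast+
  ultimately show ?thesis
    unfolding cl_of_complex_def cl_add_def by (simp add: algebra_simps abs_triangle_ineq[THEN order_trans])
qed

lemma cl_norm_slice:
  assumes j: "j \<in> cl_sphere n"
  shows "cl_norm n (cl_slice j z) = cmod z"
proof -
  have "j {} = 0"
    using j by (simp add: cl_sphere_def)
  then have "(cl_slice j z A)\<^sup>2 = (Re z)\<^sup>2 * cl_real 1 A + (Im z)\<^sup>2 * (j A)\<^sup>2" for A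
    by (auto simp: cl_slice_apply cl_real_def power_mult_distrib)
  then have "(\<Sum>A\<in>Pow {1..n}. (cl_slice j z A)\<^sup>2) = (Re z)\<^sup>2 + (Im z)\<^sup>2"
    using cl_sphere_sum_squares[OF j]
    by (simp add: sum.distrib cl_real_def flip: sum_distrib_left)
  then show ?thesis
    by (simp add: cl_norm_def cmod_def)
qed

lemma cl_slice_paravector:
  assumes j: "j \<in> cl_sphere n"
  shows "cl_slice j z \<in> paravectors n"
proof -
  have "card A \<le> 1" if "cl_slice j z A \<noteq> 0" for A
  proof (cases "A = {}")
    case False
    then have "j A \<noteq> 0"
      using that by (simp add: cl_slice_apply cl_real_def)
    then show ?thesis
      using cl_sphere_support[OF j] by force
  qed simp
  then show ?thesis
    using cl_slice_clifford[OF cl_sphere_clifford[OF j]] by (simp add: paravectors_def)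
qed

lemma zero_paravector: "cl_real 0 \<in> paravectors n"
  by (auto simp: paravectors_def cl_real_def clifford_def)

lemma paravector_slice:
  assumes n: "n \<ge> 1" and x: "x \<in> paravectors n"
  obtains j z where "j \<in> cl_sphere n" and "x = cl_slice j z"
proof -
  define y where "y A = (if A = {} then 0 else x A)" for A
  define v where "v = cl_norm n y"
  have xc: "x \<in> clifford n"
    using x by (simp add: paravectors_def)
  show ?thesis
  proof (cases "v = 0")
    case True
    have "x A = 0" if "A \<noteq> {}" for A
    proof (cases "A \<in> Pow {1..n}")
      case True
      then have "y A = 0"
        using \<open>v = 0\<close> by (simp add: v_def cl_norm_L2_set L2_set_eq_0_iff)
      then show ?thesis
        using that by (simp add: y_def)
    next
      case False
      then show ?thesis
        using xc unfolding clifford_def by blast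
    qed
    then have "x = cl_slice (cl_basis 1) (of_real (x {}))"
      by (auto simp: fun_eq_iff cl_slice_apply cl_real_def)
    then show ?thesis
      using that cl_basis_sphere n by auto
  next
    case False
    then have v: "v > 0"
      using cl_norm_nonneg v_def by (metis order_le_less)
    define j where "j = (\<lambda>A. y A / v)"
    have "cl_norm n j = 1"
      using v L2_set_right_distrib[of "1 / v" y "Pow {1..n}"]
      by (simp add: j_def v_def cl_norm_L2_set)
    then have "j \<in> cl_sphere n"
      using x by (auto simp: cl_sphere_def paravectors_def clifford_def j_def y_def)
    moreover have "x = cl_slice j (Complex (x {}) v)"
      using v by (auto simp: fun_eq_iff cl_slice_apply cl_real_def j_def y_def)
    ultimately show ?thesis
      using that by blast
  qed
qed

section \<open>Slice monogenic functions and holomorphic functions\<close>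

lemma has_field_derivative_real_coordinates:
  fixes g :: "complex \<Rightarrow> complex"
  assumes "(g has_field_derivative g') (at (Complex (fst p) (snd p)))"
  shows "((\<lambda>q. Re (g (Complex (fst q) (snd q)))) has_derivative
           (\<lambda>(h, k). h * Re g' + k * - Im g')) (at p)"
    and "((\<lambda>q. Im (g (Complex (fst q) (snd q)))) has_derivative
           (\<lambda>(h, k). h * Im g' + k * Re g')) (at p)"
proof -
  define cx where "cx q = Complex (fst q) (snd q)" for q :: "real \<times> real"
  have "(cx has_derivative cx) (at p)"
    unfolding cx_def[abs_def] Complex_eq by (auto intro!: derivative_eq_intros)
  moreover have "(g has_derivative (\<lambda>w. g' * w)) (at (cx p))"
    using assms by (simp add: cx_def has_field_derivative_def)
  ultimately have dg: "((\<lambda>q. g (cx q)) has_derivative (\<lambda>q. g' * cx q)) (at p)"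
    by (rule has_derivative_compose)
  have "(\<lambda>q. Re (g' * cx q)) = (\<lambda>(h, k). h * Re g' + k * - Im g')"
    and "(\<lambda>q. Im (g' * cx q)) = (\<lambda>(h, k). h * Im g' + k * Re g')"
    by (auto simp: cx_def algebra_simps)
  then show "((\<lambda>q. Re (g (Complex (fst q) (snd q)))) has_derivative
      (\<lambda>(h, k). h * Re g' + k * - Im g')) (at p)"
    and "((\<lambda>q. Im (g (Complex (fst q) (snd q)))) has_derivative
      (\<lambda>(h, k). h * Im g' + k * Re g')) (at p)"
    using has_derivative_Re[OF dg] has_derivative_Im[OF dg] by (simp_all add: cx_def)
qed

lemma Cauchy_Riemann_imp_has_field_derivative:
  assumes "(u has_derivative (\<lambda>(h, k). h * ux + k * uy)) (at (Re z, Im z))"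
    and "(v has_derivative (\<lambda>(h, k). h * vx + k * vy)) (at (Re z, Im z))"
    and "vy = ux" and "uy = - vx"
  shows "((\<lambda>w. Complex (u (Re w, Im w)) (v (Re w, Im w))) has_field_derivative Complex ux vx) (at z)"
proof -
  have coordinates: "((\<lambda>w. (Re w, Im w)) has_derivative (\<lambda>h. (Re h, Im h))) (at z)"
    by (auto intro!: derivative_eq_intros)
  have "((\<lambda>w. of_real (u (Re w, Im w)) + \<i> * of_real (v (Re w, Im w))) has_derivative
      (\<lambda>h. of_real (Re h * ux + Im h * uy) + \<i> * of_real (Re h * vx + Im h * vy))) (at z)"
    using has_derivative_compose[OF coordinates assms(1)] has_derivative_compose[OF coordinates assms(2)]
    by (auto intro!: derivative_eq_intros)
  moreover have "(\<lambda>h. of_real (Re h * ux + Im h * uy) + \<i> * of_real (Re h * vx + Im h * vy))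
      = (\<lambda>h. Complex ux vx * h)"
    using assms(3,4) by (auto simp: complex_eq_iff algebra_simps)
  ultimately show ?thesis
    by (simp add: has_field_derivative_def Complex_eq)
qed

lemma slice_monogenicI:
  fixes G :: "nat set \<Rightarrow> complex \<Rightarrow> complex"
  assumes holomorphic: "\<And>A. G A holomorphic_on UNIV"
    and conj: "\<And>A z. G A (cnj z) = cnj (G A z)"
    and support: "\<And>A z. \<not> A \<subseteq> {1..n} \<Longrightarrow> G A z = 0"
    and slices: "\<And>j z. j \<in> cl_sphere n \<Longrightarrow> f (cl_slice j z) = cl_of_complex n j (\<lambda>A. G A z)"
  shows "slice_monogenic n f"
proof -
  define cx where "cx p = Complex (fst p) (snd p)" for p :: "real \<times> real"
  define f0 where "f0 p = (\<lambda>A. Re (G A (cx p)))" for p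
  define f1 where "f1 p = (\<lambda>A. Im (G A (cx p)))" for p
  define D0u where "D0u p = (\<lambda>A. Re (deriv (G A) (cx p)))" for p
  define D0v where "D0v p = (\<lambda>A. - Im (deriv (G A) (cx p)))" for p
  define D1u where "D1u p = (\<lambda>A. Im (deriv (G A) (cx p)))" for p
  define D1v where "D1v = D0u"
  have derivative: "(G A has_field_derivative deriv (G A) (cx p)) (at (cx p))" for A p
    by (rule holomorphic_derivI[OF holomorphic]) auto
  have "continuous_on UNIV cx"
    unfolding cx_def[abs_def] Complex_eq by (intro continuous_intros)
  moreover have "continuous_on UNIV (deriv (G A))" for A
    by (intro holomorphic_on_imp_continuous_on holomorphic_deriv holomorphic open_UNIV)
  ultimately have "continuous_on UNIV (\<lambda>p. deriv (G A) (cx p))" for A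
    by (metis continuous_on_compose2 subset_UNIV)
  then have continuous: "continuous_on UNIV (\<lambda>p. D0u p A) \<and> continuous_on UNIV (\<lambda>p. D0v p A) \<and>
      continuous_on UNIV (\<lambda>p. D1u p A) \<and> continuous_on UNIV (\<lambda>p. D1v p A)" for A
    unfolding D0u_def D0v_def D1u_def D1v_def by (auto intro!: continuous_intros)
  have derivatives: "((\<lambda>q. f0 q A) has_derivative (\<lambda>(h, k). h * D0u p A + k * D0v p A)) (at p)"
      "((\<lambda>q. f1 q A) has_derivative (\<lambda>(h, k). h * D1u p A + k * D1v p A)) (at p)" for A p
    using has_field_derivative_real_coordinates[OF derivative[of A p, unfolded cx_def]]
    by (simp_all add: f0_def f1_def D0u_def D0v_def D1u_def D1v_def cx_def)
  have clifford: "f0 p \<in> clifford n \<and> f1 p \<in> clifford n" for p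
    using support by (fastforce simp: clifford_def f0_def f1_def)
  have symmetry: "f0 (u, - v) = f0 (u, v) \<and> f1 (u, - v) = cl_scale (-1) (f1 (u, v))" for u v
    using conj[of _ "Complex u v"] by (simp add: f0_def f1_def cx_def cl_scale_def fun_eq_iff complex_cnj)
  have CR: "D0u p = D1v p \<and> D0v p = cl_scale (-1) (D1u p)" for p
    by (simp add: D1v_def D0v_def D1u_def cl_scale_def fun_eq_iff)
  have slices': "f (cl_add (cl_real u) (cl_scale v j)) = cl_add (f0 (u, v)) (cl_mult n j (f1 (u, v)))"
    if "j \<in> cl_sphere n" for u v j
    using slices[OF that, of "Complex u v"]
    by (simp add: cl_slice_def cl_of_complex_def f0_def f1_def cx_def)
  show ?thesis
    unfolding slice_monogenic_def
    by (rule exI[of _ f0], rule exI[of _ f1], rule exI[of _ D0u], rule exI[of _ D0v],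
        rule exI[of _ D1u], rule exI[of _ D1v])
      (use clifford derivatives continuous symmetry CR slices' in blast)
qed

lemma slice_monogenicE:
  assumes "slice_monogenic n f"
  obtains G :: "nat set \<Rightarrow> complex \<Rightarrow> complex"
  where "\<And>A. G A holomorphic_on UNIV"
    and "\<And>A z. G A (cnj z) = cnj (G A z)"
    and "\<And>A z. \<not> A \<subseteq> {1..n} \<Longrightarrow> G A z = 0"
    and "\<And>j z. j \<in> cl_sphere n \<Longrightarrow> f (cl_slice j z) = cl_of_complex n j (\<lambda>A. G A z)"
proof -
  obtain f0 f1 D0u D0v D1u D1v :: "real \<times> real \<Rightarrow> cl" where
    clifford: "\<forall>p. f0 p \<in> clifford n \<and> f1 p \<in> clifford n" and
    d0: "\<forall>A p. ((\<lambda>q. f0 q A) has_derivative (\<lambda>(h, k). h * D0u p A + k * D0v p A)) (at p)" and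
    d1: "\<forall>A p. ((\<lambda>q. f1 q A) has_derivative (\<lambda>(h, k). h * D1u p A + k * D1v p A)) (at p)" and
    symmetry: "\<forall>u v. f0 (u, - v) = f0 (u, v) \<and> f1 (u, - v) = cl_scale (-1) (f1 (u, v))" and
    CR: "\<forall>p. D0u p = D1v p \<and> D0v p = cl_scale (-1) (D1u p)" and
    slices: "\<forall>u v j. j \<in> cl_sphere n \<longrightarrow>
      f (cl_add (cl_real u) (cl_scale v j)) = cl_add (f0 (u, v)) (cl_mult n j (f1 (u, v)))"
    using assms unfolding slice_monogenic_def by metis
  define G where "G A z = Complex (f0 (Re z, Im z) A) (f1 (Re z, Im z) A)" for A z
  have "(G A has_field_derivative Complex (D0u (Re z, Im z) A) (D1u (Re z, Im z) A)) (at z)" for A z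
    unfolding G_def[abs_def] using d0 d1 CR
    by (intro Cauchy_Riemann_imp_has_field_derivative) (auto simp: cl_scale_def)
  then have "G A holomorphic_on UNIV" for A
    by (auto simp: holomorphic_on_open)
  moreover have "G A (cnj z) = cnj (G A z)" for A z
    using symmetry by (simp add: G_def cl_scale_def complex_eq_iff)
  moreover have "G A z = 0" if "\<not> A \<subseteq> {1..n}" for A z
  proof -
    have "f0 (Re z, Im z) A = 0" "f1 (Re z, Im z) A = 0"
      using clifford that unfolding clifford_def by blast+
    then show ?thesis
      by (simp add: G_def complex_eq_iff)
  qed
  moreover have "f (cl_slice j z) = cl_of_complex n j (\<lambda>A. G A z)" if "j \<in> cl_sphere n" for j z
    using slices that by (simp add: cl_slice_def cl_of_complex_def G_def)
  ultimately show ?thesis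
    using that by blast
qed

lemma entire_real_power_series:
  fixes G :: "complex \<Rightarrow> complex"
  assumes holomorphic: "G holomorphic_on UNIV" and conj: "\<And>z. G (cnj z) = cnj (G z)"
  obtains c :: "nat \<Rightarrow> real" where "\<And>z. (\<lambda>l. of_real (c l) * z ^ l) sums G z"
proof
  define d where "d l = (deriv ^^ l) G 0 / fact l" for l
  have d: "(\<lambda>l. d l * z ^ l) sums G z" for z
    using holomorphic_power_series[of G 0 "norm z + 1" z] holomorphic_on_subset[OF holomorphic]
    by (simp add: d_def)
  have "(\<lambda>l. cnj (d l * cnj z ^ l)) sums cnj (G (cnj z))" for z
    using d[of "cnj z"] by (simp only: sums_cnj)
  then have d_cnj: "(\<lambda>l. cnj (d l) * z ^ l) sums G z" for z
    by (simp add: conj)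
  \<comment> \<open>averaging the two expansions makes the coefficients real\<close>
  show "(\<lambda>l. of_real (Re (d l)) * z ^ l) sums G z" for z
  proof -
    have "(\<lambda>l. (d l * z ^ l + cnj (d l) * z ^ l) / 2) sums ((G z + G z) / 2)"
      by (intro sums_divide sums_add d d_cnj)
    moreover have "(d l * z ^ l + cnj (d l) * z ^ l) / 2 = of_real (Re (d l)) * z ^ l" for l
      by (simp add: complex_add_cnj flip: distrib_right)
    ultimately show ?thesis
      by simp
  qed
qed

lemma slice_monogenic_taylor:
  assumes n: "n \<ge> 1" and g: "slice_monogenic n g"
  obtains a where "\<forall>l. a l \<in> clifford n"
    and "\<forall>x\<in>paravectors n. \<forall>A. (\<lambda>N. poly_fun n a N x A) \<longlonglongrightarrow> g x A"
proof -
  obtain G where holomorphic: "\<And>A. G A holomorphic_on UNIV"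
    and conj: "\<And>A z. G A (cnj z) = cnj (G A z)"
    and support: "\<And>A z. \<not> A \<subseteq> {1..n} \<Longrightarrow> G A z = 0"
    and slices: "\<And>j z. j \<in> cl_sphere n \<Longrightarrow> g (cl_slice j z) = cl_of_complex n j (\<lambda>A. G A z)"
    using slice_monogenicE[OF g] by blast
  have "\<forall>B. \<exists>c. \<forall>z. (\<lambda>l. of_real (c l) * z ^ l) sums G B z"
    using entire_real_power_series[OF holomorphic conj] by blast
  then obtain c where c: "\<And>B z. (\<lambda>l. of_real (c B l) * z ^ l) sums G B z"
    by (metis choice)
  define a where "a l B = (if B \<subseteq> {1..n} then c B l else 0)" for l B
  have a: "\<forall>l. a l \<in> clifford n"
    by (auto simp: a_def clifford_def)
  have "(\<lambda>l. of_real (a l B) * z ^ l) sums G B z" for B z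
    using c[of B z] support[of B z] by (cases "B \<subseteq> {1..n}") (simp_all add: a_def)
  then have lim: "(\<lambda>N. cl_of_complex n j (\<lambda>B. \<Sum>l\<le>N. of_real (a l B) * z ^ l) A)
      \<longlonglongrightarrow> cl_of_complex n j (\<lambda>B. G B z) A" for j z A
    by (intro cl_of_complex_tendsto) (simp add: sums_def_le)
  have "(\<lambda>N. poly_fun n a N x A) \<longlonglongrightarrow> g x A" if x: "x \<in> paravectors n" for x A
  proof -
    obtain j z where j: "j \<in> cl_sphere n" and x: "x = cl_slice j z"
      using paravector_slice[OF n x] .
    show ?thesis
      using lim[of j z A] by (simp add: x slices[OF j] poly_fun_slice[OF j a])
  qed
  then show ?thesis
    using that a by blast
qed

lemma poly_fun_slice_monogenic:
  assumes a: "\<forall>l. a l \<in> clifford n"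
  shows "slice_monogenic n (poly_fun n a N)"
proof (rule slice_monogenicI[where G = "\<lambda>A z. \<Sum>l\<le>N. of_real (a l A) * z ^ l"])
  show "(\<lambda>z. \<Sum>l\<le>N. of_real (a l A) * z ^ l) holomorphic_on UNIV" for A
    by (intro holomorphic_intros)
  show "(\<Sum>l\<le>N. of_real (a l A) * cnj z ^ l) = cnj (\<Sum>l\<le>N. of_real (a l A) * z ^ l)" for A z
    by simp
  show "(\<Sum>l\<le>N. of_real (a l A) * z ^ l) = 0" if "\<not> A \<subseteq> {1..n}" for A z
  proof -
    have "a l A = 0" for l
      using a that unfolding clifford_def by blast
    then show ?thesis
      by simp
  qed
  show "poly_fun n a N (cl_slice j z) = cl_of_complex n j (\<lambda>A. \<Sum>l\<le>N. of_real (a l A) * z ^ l)"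
    if "j \<in> cl_sphere n" for j z
    by (rule poly_fun_slice[OF that a])
qed

section \<open>Cauchy estimates for the Taylor coefficients\<close>

lemma power_series_coeff_bound:
  fixes c :: "nat \<Rightarrow> complex"
  assumes summable: "\<And>z. summable (\<lambda>l. c l * z ^ l)" and r: "r > 0"
    and bound: "\<And>z. norm z = r \<Longrightarrow> norm (\<Sum>l. c l * z ^ l) \<le> M"
  shows "norm (c m) \<le> M / r ^ m"
proof -
  define F where "F = Abs_fps c"
  have "ereal r < ereal (r + 1)"
    by simp
  also have "\<dots> \<le> fps_conv_radius F"
    using conv_radius_geI[OF summable, of "of_real (r + 1)"] r
    by (simp add: F_def fps_conv_radius_def)
  finally have radius: "fps_conv_radius F > ereal r" .
  then have cball: "cball 0 r \<subseteq> eball 0 (fps_conv_radius F)"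
    by (auto simp: eball_def intro!: le_less_trans[OF _ radius])
  have "0 < fps_conv_radius F"
    using r by (intro order.strict_trans[OF _ radius]) simp
  then have nth: "fps_nth F m = (deriv ^^ m) (eval_fps F) 0 / fact m"
    by (intro fps_nth_fps_expansion eval_fps_has_fps_expansion)
  have "norm ((deriv ^^ m) (eval_fps F) 0) \<le> fact m * M / r ^ m"
  proof (rule Cauchy_inequality)
    show "eval_fps F holomorphic_on ball 0 r"
      by (rule holomorphic_on_eval_fps) (use cball in auto)
    show "continuous_on (cball 0 r) (eval_fps F)"
      by (rule continuous_on_subset[OF continuous_on_eval_fps cball])
    show "norm (eval_fps F z) \<le> M" if "norm (0 - z) = r" for z
      using bound[of z] that by (simp add: eval_fps_def F_def)
  qed (rule r)
  then have "norm (fps_nth F m) \<le> M / r ^ m"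
    unfolding nth by (simp add: norm_divide field_simps)
  then show ?thesis
    by (simp add: F_def)
qed

lemma taylor_component_series:
  assumes n: "n \<ge> 1" and a: "\<forall>l. a l \<in> clifford n"
    and conv: "\<forall>x\<in>paravectors n. \<forall>A. (\<lambda>N. poly_fun n a N x A) \<longlonglongrightarrow> f x A"
    and B: "B \<subseteq> {1..n}"
  obtains L where "(\<lambda>l. of_real (a l B) * z ^ l) sums L"
    and "cmod L \<le> cl_norm n (f (cl_slice (cl_basis 1) z))
      + cl_norm n (f (cl_slice (cl_basis 1) (cnj z)))"
proof -
  define e where "e = cl_basis 1"
  define x where "x = cl_slice e z"
  define x' where "x' = cl_slice e (cnj z)"
  define D where "D = sym_diff {1} B"
  define Q where "Q N = (\<lambda>A. \<Sum>l\<le>N. of_real (a l A) * z ^ l)" for N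
  have e: "e \<in> cl_sphere n"
    using n by (simp add: e_def cl_basis_sphere)
  have B': "B \<in> Pow {1..n}" and D: "D \<in> Pow {1..n}"
    using B n by (auto simp: D_def)
  have "poly_fun n a N x = cl_of_complex n e (Q N)"
    and "poly_fun n a N x' = cl_of_complex n e (\<lambda>A. cnj (Q N A))" for N
    using poly_fun_slice[OF e a] by (simp_all add: x_def x'_def Q_def)
  then have re: "Re (Q N B) = (poly_fun n a N x B + poly_fun n a N x' B) / 2"
    and im: "Im (Q N B) = cl_sign {1} B * ((poly_fun n a N x D - poly_fun n a N x' D) / 2)" for N
    using cl_of_complex_basis_Re_Im[of 1 n B "Q N"] B n by (simp_all add: e_def D_def)
  have "x \<in> paravectors n" "x' \<in> paravectors n"
    using e by (simp_all add: x_def x'_def cl_slice_paravector)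
  then have lim: "(\<lambda>N. poly_fun n a N x A) \<longlonglongrightarrow> f x A" "(\<lambda>N. poly_fun n a N x' A) \<longlonglongrightarrow> f x' A" for A
    using conv by blast+
  define L where "L = Complex ((f x B + f x' B) / 2) (cl_sign {1} B * ((f x D - f x' D) / 2))"
  have "(\<lambda>N. Complex (Re (Q N B)) (Im (Q N B))) \<longlonglongrightarrow> L"
    unfolding re im L_def by (intro tendsto_intros lim) simp_all
  then have sums: "(\<lambda>l. of_real (a l B) * z ^ l) sums L"
    unfolding complex.collapse sums_def_le Q_def .
  have "cmod L \<le> \<bar>Re L\<bar> + \<bar>Im L\<bar>"
    by (rule cmod_le)
  also have "\<bar>Re L\<bar> \<le> (cl_norm n (f x) + cl_norm n (f x')) / 2"
    using cl_component_le_norm[OF B', of "f x"] cl_component_le_norm[OF B', of "f x'"]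
    by (simp add: L_def)
  also have "\<bar>Im L\<bar> \<le> (cl_norm n (f x) + cl_norm n (f x')) / 2"
    using cl_component_le_norm[OF D, of "f x"] cl_component_le_norm[OF D, of "f x'"]
    by (simp add: L_def abs_mult abs_cl_sign)
  finally have "cmod L \<le> cl_norm n (f x) + cl_norm n (f x')"
    by simp
  then show ?thesis
    using that[OF sums] by (simp add: x_def x'_def e_def)
qed

lemma taylor_coefficient_bound:
  assumes n: "n \<ge> 1" and a: "\<forall>l. a l \<in> clifford n"
    and conv: "\<forall>x\<in>paravectors n. \<forall>A. (\<lambda>N. poly_fun n a N x A) \<longlonglongrightarrow> f x A"
    and r: "r > 0" and bound: "\<And>z. cmod z = r \<Longrightarrow> cl_norm n (f (cl_slice (cl_basis 1) z)) \<le> M"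
  shows "\<bar>a l B\<bar> \<le> 2 * M / r ^ l"
proof (cases "B \<subseteq> {1..n}")
  case False
  then have "a l B = 0"
    using a by (auto simp: clifford_def)
  moreover have "cl_norm n (f (cl_slice (cl_basis 1) (of_real r))) \<le> M"
    using r by (intro bound) simp
  then have "0 \<le> M"
    by (rule order_trans[OF cl_norm_nonneg])
  ultimately show ?thesis
    using r by simp
next
  case True
  have "cmod (of_real (a l B)) \<le> 2 * M / r ^ l"
  proof (rule power_series_coeff_bound[OF _ r])
    show "summable (\<lambda>l. of_real (a l B) * z ^ l)" for z :: complex
    proof -
      obtain L where "(\<lambda>l. of_real (a l B) * z ^ l) sums L"
        using taylor_component_series[OF n a conv True, of z] by blast
      then show ?thesis
        by (rule sums_summable)
    qed
    show "cmod (\<Sum>l. of_real (a l B) * z ^ l) \<le> 2 * M" if "cmod z = r" for z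
    proof -
      obtain L where "(\<lambda>l. of_real (a l B) * z ^ l) sums L"
        and "cmod L \<le> cl_norm n (f (cl_slice (cl_basis 1) z))
          + cl_norm n (f (cl_slice (cl_basis 1) (cnj z)))"
        using taylor_component_series[OF n a conv True] .
      then show ?thesis
        using bound[OF that] bound[of "cnj z"] that by (simp add: sums_iff)
    qed
  qed
  then show ?thesis
    by simp
qed

section \<open>Proximate orders\<close>

lemma proximate_order_DERIV:
  assumes "proximate_order rh \<rho>" and "x > 0"
  shows "DERIV rh x :> deriv rh x"
proof -
  have "rh differentiable (at x within {0..})"
    using assms by (simp add: proximate_order_def)
  moreover have "at x within {0..} = at x"
    using assms(2) by (intro at_within_interior) simp
  ultimately show ?thesis
    by (simp add: DERIV_deriv_iff_real_differentiable)
qed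

lemma proximate_order_log_increment:
  assumes po: "proximate_order rh \<rho>" and q: "q > 1"
  shows "eventually (\<lambda>r. (rh (q * r) - rh r) * ln r \<le> q - 1) at_top"
proof -
  have "((\<lambda>r. deriv rh r * r * ln r) \<longlongrightarrow> 0) at_top"
    using po by (simp add: proximate_order_def)
  then have "eventually (\<lambda>r. \<bar>deriv rh r * r * ln r\<bar> < 1) at_top"
    by (auto simp: tendsto_iff dist_real_def dest!: spec[of _ 1])
  then obtain R where R: "\<And>r. r \<ge> R \<Longrightarrow> \<bar>deriv rh r * r * ln r\<bar> < 1"
    by (auto simp: eventually_at_top_linorder)
  have "(rh (q * r) - rh r) * ln r \<le> q - 1" if r: "r \<ge> max 1 R" for r
  proof -
    have "r < q * r"
      using q r by simp
    then obtain \<xi> where \<xi>: "r < \<xi>" "\<xi> < q * r" and mvt: "rh (q * r) - rh r = (q * r - r) * deriv rh \<xi>"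
      using MVT2[of r "q * r" rh "deriv rh"] proximate_order_DERIV[OF po] r by force
    have ln: "0 \<le> ln r" "r * ln r \<le> \<xi> * ln \<xi>"
      using \<xi> r by (auto intro!: mult_mono)
    have "(rh (q * r) - rh r) * ln r = (q - 1) * deriv rh \<xi> * (r * ln r)"
      unfolding mvt by (simp add: algebra_simps)
    also have "\<dots> \<le> (q - 1) * \<bar>deriv rh \<xi>\<bar> * (\<xi> * ln \<xi>)"
      by (rule mult_mono[OF mult_left_mono]) (use q r ln in auto)
    also have "\<dots> = (q - 1) * \<bar>deriv rh \<xi> * \<xi> * ln \<xi>\<bar>"
      using \<xi> r ln by (simp add: abs_mult)
    also have "\<dots> \<le> q - 1"
      using R[of \<xi>] \<xi> r q by (simp add: mult_left_le)
    finally show ?thesis .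
  qed
  then show ?thesis
    unfolding eventually_at_top_linorder by blast
qed

lemma proximate_order_dilation:
  assumes po: "proximate_order rh \<rho>" and s: "0 < s" "s < t"
  obtains q where "q > 1"
    and "eventually (\<lambda>r. s * (q * r) powr rh (q * r) \<le> t * r powr rh r) at_top"
proof -
  define \<phi> where "\<phi> q = s * exp ((\<rho> + 1) * ln q + (q - 1))" for q :: real
  have "(\<phi> \<longlongrightarrow> s * exp ((\<rho> + 1) * ln 1 + (1 - 1))) (at_right 1)"
    unfolding \<phi>_def by (intro tendsto_intros) auto
  then have "eventually (\<lambda>q. \<phi> q < t \<and> q > 1) (at_right 1)"
    using s by (intro eventually_conj order_tendstoD eventually_at_right_less) auto
  then obtain q where q: "\<phi> q < t" "q > 1"
    using eventually_happens' trivial_limit_at_right_real by blast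
  have "(rh \<longlongrightarrow> \<rho>) at_top"
    using po by (simp add: proximate_order_def)
  then have "eventually (\<lambda>r. rh r < \<rho> + 1) at_top"
    by (rule order_tendstoD) simp
  then obtain R where R: "\<And>r. r \<ge> R \<Longrightarrow> rh r < \<rho> + 1"
    by (auto simp: eventually_at_top_linorder)
  have "eventually (\<lambda>r. r \<ge> max 1 R \<and> (rh (q * r) - rh r) * ln r \<le> q - 1) at_top"
    using proximate_order_log_increment[OF po q(2)] by (intro eventually_conj eventually_ge_at_top)
  moreover have "s * (q * r) powr rh (q * r) \<le> t * r powr rh r"
    if "r \<ge> max 1 R \<and> (rh (q * r) - rh r) * ln r \<le> q - 1" for r
  proof -
    have r: "r \<ge> max 1 R" and increment: "(rh (q * r) - rh r) * ln r \<le> q - 1"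
      using that by auto
    have "R \<le> q * r"
      using q r by (simp add: order_trans[of R r])
    then have "rh (q * r) \<le> \<rho> + 1"
      using R[of "q * r"] by simp
    then have exponent: "rh (q * r) * ln q + (rh (q * r) - rh r) * ln r \<le> (\<rho> + 1) * ln q + (q - 1)"
      using increment q by (intro add_mono mult_right_mono) auto
    have "s * (q * r) powr rh (q * r)
        = s * (exp (rh (q * r) * ln q + (rh (q * r) - rh r) * ln r) * r powr rh r)"
      using q r by (simp add: powr_def ln_mult algebra_simps flip: exp_add)
    also have "\<dots> \<le> \<phi> q * r powr rh r"
      using exponent s unfolding \<phi>_def mult.assoc by (intro mult_left_mono mult_right_mono) auto
    also have "\<dots> \<le> t * r powr rh r"
      using q by (intro mult_right_mono) auto
    finally show ?thesis .
  qed
  ultimately have "eventually (\<lambda>r. s * (q * r) powr rh (q * r) \<le> t * r powr rh r) at_top"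
    by (rule eventually_mono)
  then show ?thesis
    using that q(2) by blast
qed

lemma proximate_order_dilation_bound:
  assumes "proximate_order rh \<rho>" and "0 < s" "s < t"
  obtains q R where "q > 1" and "R \<ge> 1"
    and "\<And>r. s * (q * max r R) powr rh (q * max r R) \<le> t * r powr rh r + t * R powr rh R"
proof -
  obtain q where q: "q > 1"
    and "eventually (\<lambda>r. s * (q * r) powr rh (q * r) \<le> t * r powr rh r) at_top"
    using proximate_order_dilation[OF assms] by blast
  then obtain R0 where R0: "\<And>r. r \<ge> R0 \<Longrightarrow> s * (q * r) powr rh (q * r) \<le> t * r powr rh r"
    by (auto simp: eventually_at_top_linorder)
  define R where "R = max R0 1"
  have growth: "s * (q * r) powr rh (q * r) \<le> t * r powr rh r" if "r \<ge> R" for r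
    using R0 that by (simp add: R_def)
  have "s * (q * max r R) powr rh (q * max r R) \<le> t * r powr rh r + t * R powr rh R" for r
  proof -
    have "0 \<le> t * R powr rh R" "0 \<le> t * r powr rh r"
      using assms by simp_all
    then show ?thesis
      using growth[of r] growth[of R] by (cases "r \<ge> R") (simp_all add: max_def)
  qed
  moreover have "R \<ge> 1"
    by (simp add: R_def)
  ultimately show ?thesis
    using that q by blast
qed

lemma weight_antimono: "s \<le> t \<Longrightarrow> weight n rh t x \<le> weight n rh s x"
  unfolding weight_def by (simp add: mult_right_mono)

lemma in_A_mono:
  assumes f: "in_A n rh s f" and "s \<le> t"
  shows "in_A n rh t f"
proof -
  obtain M where M: "\<And>x. x \<in> paravectors n \<Longrightarrow> cl_norm n (f x) * weight n rh s x \<le> M"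
    using f by (auto simp: in_A_def bdd_above_def)
  have "cl_norm n (f x) * weight n rh t x \<le> cl_norm n (f x) * weight n rh s x" for x
    by (intro mult_left_mono weight_antimono \<open>s \<le> t\<close> cl_norm_nonneg)
  then have "cl_norm n (f x) * weight n rh t x \<le> M" if "x \<in> paravectors n" for x
    using M[OF that] by (rule order_trans)
  then show ?thesis
    using f by (auto simp: in_A_def bdd_above_def)
qed

lemma in_A_imp_in_A_plus: "in_A n rh s f \<Longrightarrow> in_A_plus n rh s f"
  unfolding in_A_plus_def by (auto elim: in_A_mono)

lemma in_A_growth_bound:
  assumes "in_A n rh s f"
  obtains M where "0 \<le> M"
    and "\<And>x. x \<in> paravectors n \<Longrightarrow> cl_norm n (f x) \<le> M * exp (s * cl_norm n x powr rh (cl_norm n x))"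
proof -
  obtain M where M: "\<And>x. x \<in> paravectors n \<Longrightarrow> cl_norm n (f x) * weight n rh s x \<le> M"
    using assms by (auto simp: in_A_def bdd_above_def)
  have "0 \<le> cl_norm n (f (cl_real 0)) * weight n rh s (cl_real 0)"
    by (simp add: cl_norm_nonneg weight_def)
  then have "0 \<le> M"
    using M[OF zero_paravector] by linarith
  moreover have "cl_norm n (f x) \<le> M * exp (s * cl_norm n x powr rh (cl_norm n x))"
    if "x \<in> paravectors n" for x
    using M[OF that] by (simp add: weight_def exp_minus field_simps)
  ultimately show ?thesis
    using that by blast
qed

lemma in_A_perturb:
  assumes f: "in_A n rh t f" and g: "slice_monogenic n g"
    and close: "\<And>x. x \<in> paravectors n \<Longrightarrow> cl_norm n (fun_diff g f x) * weight n rh t x \<le> K"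
  shows "in_A n rh t g"
proof -
  obtain M where M: "\<And>x. x \<in> paravectors n \<Longrightarrow> cl_norm n (f x) * weight n rh t x \<le> M"
    using f by (auto simp: in_A_def bdd_above_def)
  have "cl_norm n (g x) * weight n rh t x \<le> K + M" if x: "x \<in> paravectors n" for x
  proof -
    have "cl_norm n (g x) \<le> cl_norm n (fun_diff g f x) + cl_norm n (f x)"
      using cl_norm_triangle[of n "fun_diff g f x" "f x"] by (simp add: fun_diff_def)
    then have "cl_norm n (g x) * weight n rh t x
        \<le> cl_norm n (fun_diff g f x) * weight n rh t x + cl_norm n (f x) * weight n rh t x"
      by (simp add: weight_def flip: distrib_right)
    also have "\<dots> \<le> K + M"
      using close[OF x] M[OF x] by (rule add_mono)
    finally show ?thesis .
  qed
  then show ?thesis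
    using g by (auto simp: in_A_def bdd_above_def)
qed

lemma A_norm_geometric_tendsto_zero:
  assumes q: "q > 1"
    and bound: "\<And>N x. x \<in> paravectors n \<Longrightarrow> cl_norm n (h N x) * weight n rh t x \<le> K * (1 / q) ^ N"
  shows "(\<lambda>N. A_norm n rh t (h N)) \<longlonglongrightarrow> 0"
proof (rule tendsto_sandwich[of "\<lambda>_. 0" _ _ "\<lambda>N. K * (1 / q) ^ N"])
  show "eventually (\<lambda>N. A_norm n rh t (h N) \<le> K * (1 / q) ^ N) sequentially"
    unfolding A_norm_def
    by (intro always_eventually allI cSUP_least) (use bound zero_paravector in auto)
  have "bdd_above ((\<lambda>x. cl_norm n (h N x) * weight n rh t x) ` paravectors n)" for N
    using bound by (auto simp: bdd_above_def)
  then have "0 \<le> A_norm n rh t (h N)" for N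
    unfolding A_norm_def
    by (rule cSUP_upper2[OF _ zero_paravector]) (simp add: cl_norm_nonneg weight_def)
  then show "eventually (\<lambda>N. 0 \<le> A_norm n rh t (h N)) sequentially"
    by simp
  show "(\<lambda>N. K * (1 / q) ^ N) \<longlonglongrightarrow> 0"
    using q by (auto intro!: tendsto_mult_right_zero LIMSEQ_power_zero)
qed simp

section \<open>The Taylor remainder\<close>

lemma tail_le_geometric:
  fixes s :: "nat \<Rightarrow> real"
  assumes lim: "(\<lambda>N. \<Sum>l\<le>N. s l) \<longlonglongrightarrow> S"
    and bound: "\<And>l. \<bar>s l\<bar> \<le> c * \<theta> ^ l" and \<theta>: "0 \<le> \<theta>" "\<theta> < 1"
  shows "\<bar>S - (\<Sum>l\<le>N. s l)\<bar> \<le> c * \<theta> ^ Suc N / (1 - \<theta>)"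
proof -
  have "s sums S"
    using lim by (simp add: sums_def_le)
  then have tail: "(\<lambda>k. s (k + Suc N)) sums (S - (\<Sum>l\<le>N. s l))"
    using sums_split_initial_segment[of s S "Suc N"] by (simp add: lessThan_Suc_atMost)
  have geometric: "(\<lambda>k. c * \<theta> ^ Suc N * \<theta> ^ k) sums (c * \<theta> ^ Suc N / (1 - \<theta>))"
    using sums_mult[OF geometric_sums[of \<theta>], of "c * \<theta> ^ Suc N"] \<theta> by (simp add: divide_inverse)
  have tail_term: "\<bar>s (k + Suc N)\<bar> \<le> c * \<theta> ^ Suc N * \<theta> ^ k" for k
    using bound[of "k + Suc N"] by (simp add: power_add mult_ac)
  have "S - (\<Sum>l\<le>N. s l) \<le> c * \<theta> ^ Suc N / (1 - \<theta>)"
    by (rule sums_le[OF _ tail geometric]) (rule abs_le_D1[OF tail_term])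
  moreover have "- (S - (\<Sum>l\<le>N. s l)) \<le> c * \<theta> ^ Suc N / (1 - \<theta>)"
    by (rule sums_le[OF _ sums_minus[OF tail] geometric]) (rule abs_le_D2[OF tail_term])
  ultimately show ?thesis
    by linarith
qed

lemma taylor_remainder_component_bound:
  assumes a: "\<forall>l. a l \<in> clifford n"
    and conv: "\<forall>x\<in>paravectors n. \<forall>A. (\<lambda>N. poly_fun n a N x A) \<longlonglongrightarrow> f x A"
    and j: "j \<in> cl_sphere n" and q: "q > 1" and r0: "r > 0" and r: "q * cmod z \<le> r"
    and coefficients: "\<And>l B. \<bar>a l B\<bar> \<le> \<beta> / r ^ l"
  shows "\<bar>f (cl_slice j z) C - poly_fun n a N (cl_slice j z) C\<bar>
    \<le> (1 + 4 ^ n) * \<beta> * (1 / q) ^ N / (q - 1)"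
proof -
  define s where "s l = cl_of_complex n j (\<lambda>B. of_real (a l B) * z ^ l) C" for l
  have "\<bar>a 0 {}\<bar> \<le> \<beta>"
    using coefficients[of 0 "{}"] by simp
  then have "\<beta> \<ge> 0"
    by (rule order_trans[OF abs_ge_zero])
  have partial: "poly_fun n a N (cl_slice j z) C = (\<Sum>l\<le>N. s l)" for N
    using a j by (simp add: poly_fun_def s_def cl_mult_pow_slice)
  have "cmod (of_real (a l B) * z ^ l) \<le> \<beta> * (1 / q) ^ l" for l B
  proof -
    have "cmod (of_real (a l B) * z ^ l) = \<bar>a l B\<bar> * cmod z ^ l"
      by (simp add: norm_mult norm_power)
    also have "\<dots> \<le> \<beta> / r ^ l * cmod z ^ l"
      by (rule mult_right_mono[OF coefficients]) simp
    also have "\<dots> = \<beta> * (cmod z / r) ^ l"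
      by (simp add: power_divide)
    also have "\<dots> \<le> \<beta> * (1 / q) ^ l"
      using q r r0 \<open>\<beta> \<ge> 0\<close> by (intro mult_left_mono power_mono) (auto simp: field_simps)
    finally show ?thesis .
  qed
  then have "\<bar>s l\<bar> \<le> (1 + 4 ^ n) * \<beta> * (1 / q) ^ l" for l
    unfolding s_def mult.assoc by (intro cl_of_complex_component_bound j)
  moreover have "(\<lambda>N. \<Sum>l\<le>N. s l) \<longlonglongrightarrow> f (cl_slice j z) C"
    using conv cl_slice_paravector[OF j] by (simp flip: partial)
  ultimately have "\<bar>f (cl_slice j z) C - (\<Sum>l\<le>N. s l)\<bar>
      \<le> (1 + 4 ^ n) * \<beta> * (1 / q) ^ Suc N / (1 - 1 / q)"
    using q by (intro tail_le_geometric) auto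
  also have "\<dots> = (1 + 4 ^ n) * \<beta> * (1 / q) ^ N / (q - 1)"
    using q by (simp add: field_simps)
  finally show ?thesis
    by (simp add: partial)
qed

lemma taylor_remainder_norm_bound:
  assumes n: "n \<ge> 1" and a: "\<forall>l. a l \<in> clifford n"
    and conv: "\<forall>x\<in>paravectors n. \<forall>A. (\<lambda>N. poly_fun n a N x A) \<longlonglongrightarrow> f x A"
    and j: "j \<in> cl_sphere n" and q: "q > 1" and r0: "r > 0" and r: "q * cmod z \<le> r"
    and bound: "\<And>w. cmod w = r \<Longrightarrow> cl_norm n (f (cl_slice (cl_basis 1) w)) \<le> M"
  shows "cl_norm n (fun_diff (poly_fun n a N) f (cl_slice j z))
    \<le> 2 ^ n * ((1 + 4 ^ n) * (2 * M) * (1 / q) ^ N / (q - 1))"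
proof (rule cl_norm_le_components)
  fix C
  have "\<bar>f (cl_slice j z) C - poly_fun n a N (cl_slice j z) C\<bar>
      \<le> (1 + 4 ^ n) * (2 * M) * (1 / q) ^ N / (q - 1)"
    using taylor_coefficient_bound[OF n a conv r0 bound]
    by (intro taylor_remainder_component_bound[OF a conv j q r0 r]) simp
  then show "\<bar>fun_diff (poly_fun n a N) f (cl_slice j z) C\<bar>
      \<le> (1 + 4 ^ n) * (2 * M) * (1 / q) ^ N / (q - 1)"
    by (simp add: fun_diff_def abs_minus_commute)
qed

lemma taylor_remainder_weighted_bound:
  assumes n: "n \<ge> 1" and po: "proximate_order rh \<rho>" and a: "\<forall>l. a l \<in> clifford n"
    and conv: "\<forall>x\<in>paravectors n. \<forall>A. (\<lambda>N. poly_fun n a N x A) \<longlonglongrightarrow> f x A"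
    and s: "0 < s" "s < t" and f: "in_A n rh s f"
  obtains q K where "q > 1"
    and "\<And>N x. x \<in> paravectors n \<Longrightarrow>
      cl_norm n (fun_diff (poly_fun n a N) f x) * weight n rh t x \<le> K * (1 / q) ^ N"
proof -
  obtain M where M0: "0 \<le> M"
    and M: "\<And>x. x \<in> paravectors n \<Longrightarrow> cl_norm n (f x) \<le> M * exp (s * cl_norm n x powr rh (cl_norm n x))"
    using in_A_growth_bound[OF f] by blast
  obtain q R where q: "q > 1" and R: "R \<ge> 1"
    and growth: "\<And>r. s * (q * max r R) powr rh (q * max r R) \<le> t * r powr rh r + t * R powr rh R"
    using proximate_order_dilation_bound[OF po s] by blast
  have e: "cl_basis 1 \<in> cl_sphere n"
    using n by (simp add: cl_basis_sphere)
  define E where "E = exp (t * R powr rh R)"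
  define K where "K = 2 ^ n * ((1 + 4 ^ n) * (2 * (M * E)) / (q - 1))"
  have "cl_norm n (fun_diff (poly_fun n a N) f x) * weight n rh t x \<le> K * (1 / q) ^ N"
    if x: "x \<in> paravectors n" for N x
  proof -
    obtain j z where j: "j \<in> cl_sphere n" and x_eq: "x = cl_slice j z"
      using paravector_slice[OF n x] .
    define \<nu> where "\<nu> = cmod z"
    define m where "m = max \<nu> R"
    have weight: "weight n rh t x = exp (- t * \<nu> powr rh \<nu>)"
      by (simp add: weight_def x_eq cl_norm_slice[OF j] \<nu>_def)
    have m: "1 \<le> m" "\<nu> \<le> m"
      using R by (auto simp: m_def)
    have circle: "cl_norm n (f (cl_slice (cl_basis 1) w)) \<le> M * exp (s * (q * m) powr rh (q * m))"
      if "cmod w = q * m" for w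
      using M[OF cl_slice_paravector[OF e, of w]] cl_norm_slice[OF e, of w] that by simp
    have norm: "cl_norm n (fun_diff (poly_fun n a N) f x)
        \<le> 2 ^ n * ((1 + 4 ^ n) * (2 * (M * exp (s * (q * m) powr rh (q * m)))) * (1 / q) ^ N / (q - 1))"
      unfolding x_eq
      by (rule taylor_remainder_norm_bound[OF n a conv j q _ _ circle]) (use q m in \<open>auto simp: \<nu>_def\<close>)
    have "exp (s * (q * m) powr rh (q * m)) * weight n rh t x \<le> E"
      using growth[of \<nu>] by (simp add: weight E_def m_def flip: exp_add)
    then have weighted_growth: "M * exp (s * (q * m) powr rh (q * m)) * weight n rh t x \<le> M * E"
      using M0 by (simp add: mult.assoc mult_left_mono)
    have "cl_norm n (fun_diff (poly_fun n a N) f x) * weight n rh t x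
        \<le> 2 ^ n * ((1 + 4 ^ n) * (2 * (M * exp (s * (q * m) powr rh (q * m)))) * (1 / q) ^ N / (q - 1))
          * weight n rh t x"
      using norm by (rule mult_right_mono) (simp add: weight)
    also have "\<dots> = 2 ^ n * ((1 + 4 ^ n) * (2 * (M * exp (s * (q * m) powr rh (q * m)) * weight n rh t x))
        / (q - 1)) * (1 / q) ^ N"
      by (simp add: field_simps)
    also have "\<dots> \<le> K * (1 / q) ^ N"
      unfolding K_def using weighted_growth q by (intro mult_right_mono mult_left_mono divide_right_mono) auto
    finally show ?thesis .
  qed
  then show ?thesis
    using that q by blast
qed

lemma taylor_conv_A_plus:
  assumes n: "n \<ge> 1" and po: "proximate_order rh \<rho>" and \<sigma>: "\<sigma> \<ge> 0"
    and f: "in_A_plus n rh \<sigma> f" and a: "\<forall>l. a l \<in> clifford n"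
    and conv: "\<forall>x\<in>paravectors n. \<forall>A. (\<lambda>N. poly_fun n a N x A) \<longlonglongrightarrow> f x A"
  shows "conv_A_plus n rh \<sigma> (poly_fun n a) f"
proof -
  have approx: "in_A n rh (\<sigma> + \<epsilon>) (poly_fun n a N)"
    and lim: "(\<lambda>N. A_norm n rh (\<sigma> + \<epsilon>) (fun_diff (poly_fun n a N) f)) \<longlonglongrightarrow> 0" if \<epsilon>: "\<epsilon> > 0" for \<epsilon> N
  proof -
    \<comment> \<open>the growth of \<open>f\<close> in the weight \<open>\<sigma> + \<epsilon>/2\<close> controls the remainder in the weight \<open>\<sigma> + \<epsilon>\<close>\<close>
    have "0 < \<sigma> + \<epsilon> / 2" and "\<sigma> + \<epsilon> / 2 < \<sigma> + \<epsilon>" and "in_A n rh (\<sigma> + \<epsilon> / 2) f"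
      using f \<sigma> \<epsilon> by (simp_all add: in_A_plus_def)
    then obtain q K where q: "q > 1" and bound: "\<And>N x. x \<in> paravectors n \<Longrightarrow>
        cl_norm n (fun_diff (poly_fun n a N) f x) * weight n rh (\<sigma> + \<epsilon>) x \<le> K * (1 / q) ^ N"
      by (rule taylor_remainder_weighted_bound[OF n po a conv]) (rule that)
    have "in_A n rh (\<sigma> + \<epsilon>) f"
      using f \<epsilon> by (simp add: in_A_plus_def)
    then show "in_A n rh (\<sigma> + \<epsilon>) (poly_fun n a N)"
      by (rule in_A_perturb[OF _ poly_fun_slice_monogenic[OF a] bound])
    show "(\<lambda>N. A_norm n rh (\<sigma> + \<epsilon>) (fun_diff (poly_fun n a N) f)) \<longlonglongrightarrow> 0"
      by (rule A_norm_geometric_tendsto_zero[OF q bound])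
  qed
  show ?thesis
    unfolding conv_A_plus_def
  proof (intro conjI allI impI)
    show "in_A_plus n rh \<sigma> (poly_fun n a k)" for k
      unfolding in_A_plus_def using approx by blast
  qed (use f lim in auto)
qed

lemma conv_A_plus_imp_conv_A_union:
  assumes "\<sigma> \<ge> 0" and "conv_A_plus n rh \<sigma> p f"
  shows "conv_A_union n rh p f"
  using assms unfolding conv_A_union_def conv_A_plus_def in_A_plus_def
  by (intro exI[of _ "\<sigma> + 1"]) auto

lemma taylor_polynomials_dense:
  assumes n: "n \<ge> 1" and po: "proximate_order rh \<rho>" and \<sigma>: "\<sigma> \<ge> 0"
    and g: "in_A_plus n rh \<sigma> g"
  obtains p where "\<forall>k. is_cl_poly n (p k)" and "conv_A_plus n rh \<sigma> p g"
proof -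
  have "slice_monogenic n g"
    using g by (auto simp: in_A_plus_def in_A_def dest: spec[of _ 1])
  then obtain b where b: "\<forall>l. b l \<in> clifford n"
    and conv: "\<forall>x\<in>paravectors n. \<forall>A. (\<lambda>N. poly_fun n b N x A) \<longlonglongrightarrow> g x A"
    using slice_monogenic_taylor[OF n] by blast
  have "\<forall>k. is_cl_poly n (poly_fun n b k)"
    using b by (auto simp: is_cl_poly_def)
  then show ?thesis
    using that taylor_conv_A_plus[OF n po \<sigma> g b conv] by blast
qed

theorem proposition3p12:
  fixes n :: nat and rh :: "real \<Rightarrow> real" and \<rho> \<sigma> :: real
    and f :: "cl \<Rightarrow> cl" and a :: "nat \<Rightarrow> cl"
  assumes "n \<ge> 1"
    and "proximate_order rh \<rho>"
    and "\<sigma> \<ge> 0"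
    and "in_A_plus n rh \<sigma> f"
    and "\<forall>l. a l \<in> clifford n"
    and "\<forall>x\<in>paravectors n. \<forall>A. (\<lambda>N. poly_fun n a N x A) \<longlonglongrightarrow> f x A"
  shows "conv_A_plus n rh \<sigma> (poly_fun n a) f
    \<and> (\<forall>g. in_A_plus n rh 0 g \<longrightarrow> (\<exists>p. (\<forall>k. is_cl_poly n (p k)) \<and> conv_A_plus n rh 0 p g))
    \<and> (\<forall>g. in_A_union n rh g \<longrightarrow> (\<exists>p. (\<forall>k. is_cl_poly n (p k)) \<and> conv_A_union n rh p g))"
proof (intro conjI allI impI)
  note n = assms(1) and po = assms(2)
  show "conv_A_plus n rh \<sigma> (poly_fun n a) f"
    by (rule taylor_conv_A_plus[OF assms])
  show "\<exists>p. (\<forall>k. is_cl_poly n (p k)) \<and> conv_A_plus n rh 0 p g" if "in_A_plus n rh 0 g" for g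
    using taylor_polynomials_dense[OF n po order_refl that] by blast
  show "\<exists>p. (\<forall>k. is_cl_poly n (p k)) \<and> conv_A_union n rh p g" if g: "in_A_union n rh g" for g
  proof -
    obtain s where s: "s \<ge> 0" and "in_A n rh s g"
      using g unfolding in_A_union_def by (blast intro: less_imp_le)
    then obtain p where "\<forall>k. is_cl_poly n (p k)" and "conv_A_plus n rh s p g"
      using taylor_polynomials_dense[OF n po s] in_A_imp_in_A_plus by blast
    then show ?thesis
      using conv_A_plus_imp_conv_A_union[OF s] by blast
  qed
qed

end
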